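(* Let $q$ be a prime power, $n\ge1$, let $f(x)\in\mathbb{F}_{q^n}[x]$ be a permutation polynomial of $\mathbb{F}_{q^n}$, and let $h_1,\dots,h_n\in\mathbb{F}_q[x]$. For $a_1,\dots,a_n,v_1,\dots,v_n\in\mathbb{F}_{q^n}$, the polynomial $$F(x)=a_1h_1(\mathrm{Tr}(v_1f(x)))+\dots+a_nh_n(\mathrm{Tr}(v_nf(x)))$$ is a permutation polynomial of $\mathbb{F}_{q^n}$ if and only if (i) both $\{a_1,\dots,a_n\}$ and $\{v_1,\dots,v_n\}$ are bases of $\mathbb{F}_{q^n}$ over $\mathbb{F}_q$, and (ii) each $h_i$, $1\le i\le n$, is a permutation polynomial of $\mathbb{F}_q$.
   Context: $\mathrm{Tr}(x)=x+x^q+\dots+x^{q^{n-1}}$ is the trace from $\mathbb{F}_{q^n}$ to $\mathbb{F}_q$. A polynomial is a permutation polynomial of a finite field if the map it induces on that field is bijective. *)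

theory Defs
  imports "HOL-Number_Theory.Number_Theory" "HOL-Computational_Algebra.Polynomial" "HOL-Library.Cardinality"
begin

text \<open>Ambient field K = F_{q^n} is a finite field type 'a with CARD('a) = q^n.
  The subfield F_q is the set of elements fixed by x \<mapsto> x^q.\<close>

definition base_field :: "nat \<Rightarrow> 'a::field set" where
  "base_field q = {x. x ^ q = x}"

definition trace_poly :: "nat \<Rightarrow> nat \<Rightarrow> 'a::comm_ring_1 poly" where
  "trace_poly q n = (\<Sum>i<n. monom 1 (q ^ i))"

definition is_basis_over :: "'a::field set \<Rightarrow> nat \<Rightarrow> (nat \<Rightarrow> 'a) \<Rightarrow> bool" where
  "is_basis_over Kq n a \<longleftrightarrow>
     (\<forall>c. (\<forall>i<n. c i \<in> Kq) \<and> (\<Sum>i<n. c i * a i) = 0 \<longrightarrow> (\<forall>i<n. c i = 0)) \<and>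
     (\<forall>y. \<exists>c. (\<forall>i<n. c i \<in> Kq) \<and> y = (\<Sum>i<n. c i * a i))"

definition poly_over :: "'a::zero set \<Rightarrow> 'a poly \<Rightarrow> bool" where
  "poly_over S p \<longleftrightarrow> (\<forall>k. coeff p k \<in> S)"

definition perm_poly_on :: "'a::comm_semiring_0 set \<Rightarrow> 'a poly \<Rightarrow> bool" where
  "perm_poly_on S p \<longleftrightarrow> bij_betw (poly p) S S"

end

theory Submission
  imports Defs "HOL-Algebra.Ring"
begin

text \<open>Write \<open>K\<close> for the ambient field and \<open>P = F_q^n\<close>. The polynomial function factors as
  \<open>F = A \<circ> H \<circ> T \<circ> f\<close> with \<open>T y = (Tr (v_i y))_i : K \<rightarrow> P\<close>, \<open>H = (h_1, \<dots>, h_n) : P \<rightarrow> P\<close>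
  and \<open>A c = \<Sum> c_i a_i : P \<rightarrow> K\<close>. Since \<open>K\<close> and \<open>P\<close> both have \<open>q^n\<close> elements, the composite is a
  bijection exactly when each factor is. \<open>A\<close> is bijective iff the \<open>a_i\<close> form a basis, \<open>H\<close> iff every
  \<open>h_i\<close> permutes \<open>F_q\<close>, and \<open>T\<close> iff the \<open>v_i\<close> form a basis, because the trace form \<open>Tr (x y)\<close> is
  nondegenerate and \<open>T\<close> takes coordinates with respect to the dual basis.\<close>

section \<open>Frobenius and the base field\<close>

text \<open>An arbitrary type of sort \<open>{field, finite}\<close> is not known to belong to the class
  \<open>finite_field\<close>, so Fermat's little theorem is obtained from Lagrange's theorem for the unit group.\<close>
lemma power_card_eq_self:
  fixes x :: "'a::{field,finite}"
  shows "x ^ CARD('a) = x"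
proof (cases "x = 0")
  case False
  define R :: "'a ring" where "R = \<lparr>carrier = UNIV, monoid.mult = (*), one = 1, zero = 0, add = (+)\<rparr>"
  have "field R"
    by unfold_locales
      (auto simp: R_def Units_def algebra_simps intro: exI[of _ "- _"] dest: right_inverse)
  then interpret R: field R .
  have pow: "x [^]\<^bsub>R\<^esub> k = x ^ k" for k
    by (induction k) (simp_all add: R_def)
  have units: "Units R = UNIV - {0}"
    using R.field_Units by (simp add: R_def)
  have "x [^]\<^bsub>R\<^esub> card (Units R) = \<one>\<^bsub>R\<^esub>"
    by (rule R.units_power_order_eq_one) (simp_all add: units False)
  then have "x ^ card (UNIV - {0 :: 'a}) = 1"
    unfolding pow units by (simp add: R_def)
  moreover have "CARD('a) = Suc (card (UNIV - {0 :: 'a}))"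
    using finite_UNIV_card_ge_0[where 'a='a] by (simp add: card_Diff_singleton)
  ultimately show ?thesis by (metis power_Suc mult_1_right)
qed simp

lemma frobenius_add:
  assumes "primepow q" and "CARD('a::{field,finite}) = q ^ n"
  shows "(x + y :: 'a) ^ q = x ^ q + y ^ q"
proof -
  obtain p k where pk: "prime p" "k > 0" "q = p ^ k"
    using assms(1) unfolding primepow_def by blast
  have char_prime: "prime CHAR('a)"
    by (rule prime_CHAR_semidom) (simp add: finite_imp_CHAR_pos)
  have "CHAR('a) dvd p ^ (k * n)"
    using CHAR_dvd_CARD[where 'a='a] assms(2) pk(3) by (simp add: power_mult)
  then have "CHAR('a) = p"
    using char_prime pk(1) prime_dvd_power primes_dvd_imp_eq by blast
  then show ?thesis
    using freshmans_dream'[OF char_prime, of q k] pk(3) by simp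
qed

lemma frobenius_power_add:
  assumes frob: "\<And>x y :: 'a::comm_semiring_1. (x + y) ^ q = x ^ q + y ^ q"
  shows "(x + y :: 'a) ^ (q ^ i) = x ^ (q ^ i) + y ^ (q ^ i)"
proof (induction i arbitrary: x y)
  case (Suc i)
  have "(x + y) ^ (q ^ Suc i) = ((x + y) ^ q) ^ (q ^ i)"
    by (simp add: power_mult mult.commute)
  also have "\<dots> = (x ^ q) ^ (q ^ i) + (y ^ q) ^ (q ^ i)"
    by (simp add: frob Suc)
  finally show ?case
    by (simp add: power_mult mult.commute)
qed simp

lemma frobenius_sum:
  assumes frob: "\<And>x y :: 'a::comm_semiring_1. (x + y) ^ q = x ^ q + y ^ q" and "q > 0"
  shows "(\<Sum>i\<in>S. f i :: 'a) ^ q = (\<Sum>i\<in>S. f i ^ q)"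
  by (induction S rule: infinite_finite_induct) (use assms in \<open>auto simp: power_0_left\<close>)

lemma frobenius_diff:
  assumes frob: "\<And>x y :: 'a::comm_ring_1. (x + y) ^ q = x ^ q + y ^ q"
  shows "(x - y :: 'a) ^ q = x ^ q - y ^ q"
  using frob[of "x - y" y] by (simp add: algebra_simps)

lemma zero_in_base_field: "q > 0 \<Longrightarrow> (0::'a::field) \<in> base_field q"
  by (simp add: base_field_def)

lemma one_in_base_field: "(1::'a::field) \<in> base_field q"
  by (simp add: base_field_def)

lemma add_in_base_field:
  fixes x y :: "'a::field"
  assumes frob: "\<And>x y :: 'a. (x + y) ^ q = x ^ q + y ^ q"
    and "x \<in> base_field q" "y \<in> base_field q"
  shows "x + y \<in> base_field q"
  using assms by (simp add: base_field_def)

lemma diff_in_base_field: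
  fixes x y :: "'a::field"
  assumes frob: "\<And>x y :: 'a. (x + y) ^ q = x ^ q + y ^ q"
    and "x \<in> base_field q" "y \<in> base_field q"
  shows "x - y \<in> base_field q"
  using assms(2,3) frobenius_diff[OF frob, of x y] by (simp add: base_field_def)

lemma mult_in_base_field:
  "x \<in> base_field q \<Longrightarrow> y \<in> base_field q \<Longrightarrow> (x::'a::field) * y \<in> base_field q"
  by (simp add: base_field_def power_mult_distrib)

lemma power_in_base_field: "x \<in> base_field q \<Longrightarrow> (x::'a::field) ^ k \<in> base_field q"
  by (simp add: base_field_def) (metis mult.commute power_mult)

lemma sum_in_base_field:
  assumes frob: "\<And>x y :: 'a::field. (x + y) ^ q = x ^ q + y ^ q" and "q > 0"
    and "\<And>i. i \<in> S \<Longrightarrow> f i \<in> base_field q"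
  shows "(\<Sum>i\<in>S. f i :: 'a) \<in> base_field q"
  using assms(3)
  by (induction S rule: infinite_finite_induct)
    (auto intro: add_in_base_field[OF frob] zero_in_base_field[OF \<open>q > 0\<close>])

lemma poly_in_base_field:
  assumes frob: "\<And>x y :: 'a::field. (x + y) ^ q = x ^ q + y ^ q" and "q > 0"
    and "poly_over (base_field q) p" "x \<in> base_field q"
  shows "poly p (x::'a) \<in> base_field q"
  unfolding poly_altdef using assms(3,4)
  by (intro sum_in_base_field[OF frob \<open>q > 0\<close>])
    (auto simp: poly_over_def intro: mult_in_base_field power_in_base_field)

lemma base_field_power_q_power: "c \<in> base_field q \<Longrightarrow> (c::'a::field) ^ (q ^ i) = c"
  by (induction i) (simp_all add: base_field_def power_mult)

lemma card_base_field_le: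
  assumes "q \<ge> 2"
  shows "card (base_field q :: 'a::field set) \<le> q"
proof -
  define p :: "'a poly" where "p = monom 1 q - [:0, 1:]"
  have "coeff p q = 1"
    using assms by (simp add: p_def coeff_pCons split: nat.split)
  then have "p \<noteq> 0" by auto
  moreover have "degree p \<le> q"
    unfolding p_def by (rule degree_diff_le) (use assms in \<open>auto simp: degree_monom_le\<close>)
  moreover have "base_field q = {x. poly p x = 0}"
    by (auto simp: base_field_def p_def poly_monom)
  ultimately show ?thesis
    using card_poly_roots_bound[of p] by simp
qed

section \<open>The trace\<close>

definition trace :: "nat \<Rightarrow> nat \<Rightarrow> 'a::comm_ring_1 \<Rightarrow> 'a" where
  "trace q n x = (\<Sum>i<n. x ^ (q ^ i))"

lemma poly_trace_poly: "poly (trace_poly q n) x = trace q n x"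
  by (simp add: trace_poly_def trace_def poly_sum poly_monom)

lemma trace_add:
  assumes frob: "\<And>x y :: 'a::field. (x + y) ^ q = x ^ q + y ^ q"
  shows "trace q n (x + y :: 'a) = trace q n x + trace q n y"
  by (simp add: trace_def frobenius_power_add[OF frob] sum.distrib)

lemma trace_smult:
  "c \<in> base_field q \<Longrightarrow> trace q n (c * x :: 'a::field) = c * trace q n x"
  by (simp add: trace_def power_mult_distrib base_field_power_q_power sum_distrib_left)

lemma trace_sum_smult:
  assumes frob: "\<And>x y :: 'a::field. (x + y) ^ q = x ^ q + y ^ q" and "q > 0"
    and "\<And>i. i \<in> S \<Longrightarrow> c i \<in> base_field q"
  shows "trace q n (\<Sum>i\<in>S. c i * x i :: 'a) = (\<Sum>i\<in>S. c i * trace q n (x i))"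
proof -
  have "trace q n (0::'a) = 0"
    using \<open>q > 0\<close> by (simp add: trace_def power_0_left)
  then show ?thesis
    using assms(3)
    by (induction S rule: infinite_finite_induct) (simp_all add: trace_add[OF frob] trace_smult)
qed

lemma trace_lincomb_mult:
  assumes frob: "\<And>x y :: 'a::field. (x + y) ^ q = x ^ q + y ^ q" and "q > 0"
    and "\<forall>i<m. c i \<in> base_field q"
  shows "trace q n ((\<Sum>i<m. c i * v i) * y :: 'a) = (\<Sum>i<m. c i * trace q n (v i * y))"
proof -
  have "(\<Sum>i<m. c i * v i) * y = (\<Sum>i<m. c i * (v i * y))"
    by (simp add: sum_distrib_right mult.assoc)
  then show ?thesis
    using trace_sum_smult[OF frob \<open>q > 0\<close>, of "{..<m}" c n "\<lambda>i. v i * y"] assms(3) by simp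
qed

lemma trace_in_base_field_if_power_eq:
  assumes frob: "\<And>x y :: 'a::field. (x + y) ^ q = x ^ q + y ^ q" and "q > 0"
    and "x ^ (q ^ n) = x"
  shows "trace q n (x::'a) \<in> base_field q"
proof -
  have "trace q n x ^ q = (\<Sum>i<n. x ^ (q ^ Suc i))"
    unfolding trace_def frobenius_sum[OF frob \<open>q > 0\<close>]
    by (simp add: power_mult[symmetric] mult.commute)
  also have "\<dots> = (\<Sum>i<Suc n. x ^ (q ^ i)) - x"
    using sum.lessThan_Suc_shift[of "\<lambda>i. x ^ (q ^ i)" n] by simp
  also have "\<dots> = trace q n x"
    using assms(3) by (simp add: trace_def)
  finally show ?thesis
    by (simp add: base_field_def)
qed

lemma trace_in_base_field:
  assumes "primepow q" and "CARD('a::{field,finite}) = q ^ n"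
  shows "trace q n (x::'a) \<in> base_field q"
  using trace_in_base_field_if_power_eq[OF frobenius_add[OF assms]] primepow_gt_Suc_0[OF assms(1)]
    power_card_eq_self[of x] assms(2)
  by simp

text \<open>A fibre of the trace is the root set of the monic polynomial \<open>Tr(x) - c\<close> of degree
  \<open>q ^ (n - 1)\<close>.\<close>
lemma card_trace_fibre_le:
  assumes "q \<ge> 2" and "n \<ge> 1"
  shows "card {x :: 'a::field. trace q n x = c} \<le> q ^ (n - 1)"
proof -
  define p :: "'a poly" where "p = trace_poly q n - [:c:]"
  have "coeff (trace_poly q n) (q ^ (n - 1)) = (\<Sum>i<n. if i = n - 1 then 1 else 0 :: 'a)"
    unfolding trace_poly_def coeff_sum using assms(1)
    by (intro sum.cong refl) (auto simp: coeff_monom power_inject_exp)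
  also have "\<dots> = 1"
    using assms(2) by simp
  finally have "coeff p (q ^ (n - 1)) = 1"
    using assms(1) by (simp add: p_def coeff_pCons split: nat.split)
  then have "p \<noteq> 0" by auto
  moreover have "degree p \<le> q ^ (n - 1)"
    unfolding p_def trace_poly_def using assms(1)
    by (intro degree_diff_le degree_sum_le)
      (auto intro!: order.trans[OF degree_monom_le] power_increasing)
  moreover have "{x. trace q n x = c} = {x. poly p x = 0}"
    by (simp add: p_def poly_trace_poly)
  ultimately show ?thesis
    using card_poly_roots_bound[of p] by simp
qed

lemma ex_trace_nonzero:
  assumes "q \<ge> 2" and "n \<ge> 1" and "CARD('a::{field,finite}) = q ^ n"
  shows "\<exists>w::'a. trace q n w \<noteq> 0"
proof (rule ccontr)
  assume "\<not> ?thesis"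
  then have "q ^ n \<le> q ^ (n - 1)"
    using card_trace_fibre_le[OF assms(1,2), where 'a='a and c=0] assms(3) by simp
  moreover have "q ^ (n - 1) < q ^ n"
    using assms(1,2) by (intro power_strict_increasing) auto
  ultimately show False by simp
qed

text \<open>The trace takes values in the base field and its fibres are small, so counting gives
  \<open>q ^ n \<le> |base_field q| * q ^ (n - 1)\<close>.\<close>
lemma card_base_field:
  assumes "primepow q" and "n \<ge> 1" and "CARD('a::{field,finite}) = q ^ n"
  shows "card (base_field q :: 'a set) = q"
proof -
  have q2: "q \<ge> 2"
    using primepow_gt_Suc_0[OF assms(1)] by simp
  have "(UNIV :: 'a set) = (\<Union>c\<in>base_field q. {x. trace q n x = c})"
    using trace_in_base_field[OF assms(1,3)] by blast
  then have "q ^ n \<le> (\<Sum>c\<in>base_field q. card {x :: 'a. trace q n x = c})"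
    using card_UN_le[of "base_field q" "\<lambda>c. {x :: 'a. trace q n x = c}"] assms(3) by simp
  also have "\<dots> \<le> card (base_field q :: 'a set) * q ^ (n - 1)"
    using sum_bounded_above[OF card_trace_fibre_le[OF q2 assms(2)]] by simp
  finally have "q * q ^ (n - 1) \<le> card (base_field q :: 'a set) * q ^ (n - 1)"
    using assms(2) by (simp add: power_eq_if)
  then have "q \<le> card (base_field q :: 'a set)"
    using q2 by simp
  then show ?thesis
    using card_base_field_le[OF q2, where 'a='a] by simp
qed

section \<open>Bijections of finite sets and of products\<close>

lemma bij_betw_comp_imp_bij_betw:
  assumes bij: "bij_betw (g \<circ> f) X Z" and "f ` X \<subseteq> Y" and "g ` Y \<subseteq> Z"
    and "finite Y" and "card Y = card X"
  shows "bij_betw f X Y" and "bij_betw g Y Z"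
proof -
  have "inj_on f X"
    using bij inj_on_imageI2 by (auto simp: bij_betw_def)
  moreover from this have "f ` X = Y"
    using assms(2,4,5) by (simp add: card_image card_subset_eq)
  ultimately show bij_f: "bij_betw f X Y"
    by (simp add: bij_betw_def)
  have "g ` Y = Z"
    using bij \<open>f ` X = Y\<close> by (metis bij_betw_imp_surj_on image_comp)
  moreover have "card (g ` Y) = card Y"
    using bij_betw_same_card[OF bij] bij_betw_same_card[OF bij_f] \<open>g ` Y = Z\<close> by simp
  ultimately show "bij_betw g Y Z"
    using assms(4) by (simp add: bij_betw_def eq_card_imp_inj_on)
qed

lemma bij_betw_comp3_iff:
  assumes "finite Y" and "card Y = card X"
    and "f ` X \<subseteq> Y" and "g ` Y \<subseteq> Y" and "h ` Y \<subseteq> X"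
  shows "bij_betw (h \<circ> g \<circ> f) X X \<longleftrightarrow> bij_betw f X Y \<and> bij_betw g Y Y \<and> bij_betw h Y X"
proof
  assume bij: "bij_betw (h \<circ> g \<circ> f) X X"
  have "(h \<circ> g) ` Y \<subseteq> X"
    using assms(4,5) by (auto simp: image_subset_iff)
  then have "bij_betw f X Y" and "bij_betw (h \<circ> g) Y X"
    using bij_betw_comp_imp_bij_betw[OF bij assms(3) _ assms(1,2)] by auto
  moreover from this(2) have "bij_betw g Y Y" and "bij_betw h Y X"
    using bij_betw_comp_imp_bij_betw[OF _ assms(4,5,1)] by auto
  ultimately show "bij_betw f X Y \<and> bij_betw g Y Y \<and> bij_betw h Y X"
    by blast
qed (auto intro: bij_betw_trans)

lemma fun_upd_in_PiE_iff: "i \<in> I \<Longrightarrow> c \<in> PiE I A \<Longrightarrow> c(i := x) \<in> PiE I A \<longleftrightarrow> x \<in> A i"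
  by (auto simp: PiE_iff extensional_def)

lemma inj_on_PiE_map_component:
  assumes inj: "inj_on (\<lambda>c. \<lambda>i\<in>I. g i (c i)) (PiE I A)" and "c0 \<in> PiE I A" and "i \<in> I"
  shows "inj_on (g i) (A i)"
proof (rule inj_onI)
  fix x y assume x: "x \<in> A i" and y: "y \<in> A i" and "g i x = g i y"
  then have "(\<lambda>j\<in>I. g j ((c0(i := x)) j)) = (\<lambda>j\<in>I. g j ((c0(i := y)) j))"
    by (auto simp: restrict_def)
  then have "c0(i := x) = c0(i := y)"
    using inj_onD[OF inj] x y assms(2,3) by (simp add: fun_upd_in_PiE_iff)
  then show "x = y"
    by (metis fun_upd_same)
qed

lemma image_PiE_map_component:
  assumes surj: "(\<lambda>c. \<lambda>i\<in>I. g i (c i)) ` PiE I A = PiE I B" and c0: "c0 \<in> PiE I A" and i: "i \<in> I"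
  shows "g i ` A i = B i"
proof
  let ?m = "\<lambda>c. \<lambda>i\<in>I. g i (c i)"
  show "g i ` A i \<subseteq> B i"
  proof
    fix y assume "y \<in> g i ` A i"
    then obtain x where x: "x \<in> A i" "y = g i x" by blast
    have "c0(i := x) \<in> PiE I A"
      using c0 i x(1) by (simp add: fun_upd_in_PiE_iff)
    then have "?m (c0(i := x)) \<in> PiE I B"
      using surj by blast
    then show "y \<in> B i"
      using i x(2) by (metis PiE_mem fun_upd_same restrict_apply')
  qed
  show "B i \<subseteq> g i ` A i"
  proof
    fix y assume y: "y \<in> B i"
    have "?m c0 \<in> PiE I B"
      using surj c0 by blast
    then have "(?m c0)(i := y) \<in> ?m ` PiE I A"
      using y i by (simp only: surj fun_upd_in_PiE_iff)
    then obtain c where "c \<in> PiE I A" "(?m c0)(i := y) = ?m c"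
      by (rule imageE)
    then show "y \<in> g i ` A i"
      using i by (metis PiE_mem fun_upd_same image_eqI restrict_apply')
  qed
qed

lemma bij_betw_PiE_map:
  assumes "\<forall>i\<in>I. bij_betw (g i) (A i) (B i)"
  shows "bij_betw (\<lambda>c. \<lambda>i\<in>I. g i (c i)) (PiE I A) (PiE I B)"
  by (rule bij_betwI[where g = "\<lambda>d. \<lambda>i\<in>I. inv_into (A i) (g i) (d i)"])
    (use assms in \<open>fastforce simp: bij_betw_def PiE_iff extensional_def inv_into_into f_inv_into_f\<close>)+

lemma bij_betw_PiE_map_iff:
  assumes "\<And>i. i \<in> I \<Longrightarrow> A i \<noteq> {}"
  shows "bij_betw (\<lambda>c. \<lambda>i\<in>I. g i (c i)) (PiE I A) (PiE I B) \<longleftrightarrow> (\<forall>i\<in>I. bij_betw (g i) (A i) (B i))"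
proof
  assume bij: "bij_betw (\<lambda>c. \<lambda>i\<in>I. g i (c i)) (PiE I A) (PiE I B)"
  obtain c0 where c0: "c0 \<in> PiE I A"
    using assms by (metis PiE_eq_empty_iff ex_in_conv)
  show "\<forall>i\<in>I. bij_betw (g i) (A i) (B i)"
  proof
    fix i assume i: "i \<in> I"
    show "bij_betw (g i) (A i) (B i)"
      unfolding bij_betw_def
      using inj_on_PiE_map_component[OF bij_betw_imp_inj_on[OF bij] c0 i]
        image_PiE_map_component[OF bij_betw_imp_surj_on[OF bij] c0 i] by blast
  qed
qed (rule bij_betw_PiE_map)

section \<open>Coordinates\<close>

lemma bij_betw_lincomb_if_is_basis_over:
  fixes a :: "nat \<Rightarrow> 'a::field"
  assumes diff: "\<And>x y. x \<in> S \<Longrightarrow> y \<in> S \<Longrightarrow> x - y \<in> S" and basis: "is_basis_over S n a"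
  shows "bij_betw (\<lambda>c. \<Sum>i<n. c i * a i) (PiE {..<n} (\<lambda>_. S)) UNIV"
    (is "bij_betw ?lc ?P UNIV")
proof (rule bij_betw_imageI)
  show "inj_on ?lc ?P"
  proof (rule inj_onI)
    fix c d assume c: "c \<in> ?P" and d: "d \<in> ?P" and eq: "?lc c = ?lc d"
    have indep: "\<forall>i<n. e i = 0" if "\<forall>i<n. e i \<in> S" and "(\<Sum>i<n. e i * a i) = 0" for e
      using basis that unfolding is_basis_over_def by blast
    have "\<forall>i<n. c i - d i \<in> S"
      using c d by (simp add: PiE_iff diff)
    moreover have "(\<Sum>i<n. (c i - d i) * a i) = ?lc c - ?lc d"
      by (simp add: left_diff_distrib sum_subtractf)
    then have "(\<Sum>i<n. (c i - d i) * a i) = 0"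
      using eq by simp
    ultimately have "\<forall>i<n. c i - d i = 0"
      by (rule indep)
    then show "c = d"
      using c d by (intro PiE_ext) auto
  qed
  have "y \<in> ?lc ` ?P" for y
  proof -
    obtain c where c: "\<forall>i<n. c i \<in> S" "y = ?lc c"
      using basis unfolding is_basis_over_def by blast
    then have "restrict c {..<n} \<in> ?P" and "y = ?lc (restrict c {..<n})"
      by auto
    then show ?thesis by blast
  qed
  then show "?lc ` ?P = UNIV" by blast
qed

lemma is_basis_over_if_bij_betw_lincomb:
  fixes a :: "nat \<Rightarrow> 'a::field"
  assumes zero: "0 \<in> S" and bij: "bij_betw (\<lambda>c. \<Sum>i<n. c i * a i) (PiE {..<n} (\<lambda>_. S)) UNIV"
  shows "is_basis_over S n a"
proof -
  let ?lc = "\<lambda>c. \<Sum>i<n. c i * a i" and ?P = "PiE {..<n} (\<lambda>_. S)"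
  have "\<forall>i<n. c i = 0" if c: "\<forall>i<n. c i \<in> S" and "?lc c = 0" for c
  proof -
    have "restrict c {..<n} \<in> ?P" and "(\<lambda>_\<in>{..<n}. 0) \<in> ?P"
      using c zero by auto
    moreover have "?lc (restrict c {..<n}) = ?lc (\<lambda>_\<in>{..<n}. 0)"
      using \<open>?lc c = 0\<close> by simp
    ultimately have "restrict c {..<n} = (\<lambda>_\<in>{..<n}. 0)"
      using bij_betw_imp_inj_on[OF bij] by (blast dest: inj_onD)
    then show ?thesis
      by (metis lessThan_iff restrict_apply')
  qed
  moreover have "\<exists>c. (\<forall>i<n. c i \<in> S) \<and> y = ?lc c" for y
  proof -
    obtain c where "c \<in> ?P" "y = ?lc c"
      using bij_betw_imp_surj_on[OF bij] by blast
    then show ?thesis by auto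
  qed
  ultimately show ?thesis
    unfolding is_basis_over_def by blast
qed

lemma is_basis_over_iff_bij_betw:
  fixes a :: "nat \<Rightarrow> 'a::field"
  assumes "0 \<in> S" and "\<And>x y. x \<in> S \<Longrightarrow> y \<in> S \<Longrightarrow> x - y \<in> S"
  shows "is_basis_over S n a \<longleftrightarrow> bij_betw (\<lambda>c. \<Sum>i<n. c i * a i) (PiE {..<n} (\<lambda>_. S)) UNIV"
  using assms bij_betw_lincomb_if_is_basis_over is_basis_over_if_bij_betw_lincomb by blast

lemma trace_form_nondegenerate:
  fixes d :: "'a::{field,finite}"
  assumes "primepow q" and "n \<ge> 1" and "CARD('a) = q ^ n"
    and basis: "is_basis_over (base_field q) n v"
    and orth: "\<forall>i<n. trace q n (v i * d) = 0"
  shows "d = 0"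
proof (rule ccontr)
  assume "d \<noteq> 0"
  have q2: "q \<ge> 2"
    using primepow_gt_Suc_0[OF assms(1)] by simp
  obtain w :: 'a where w: "trace q n w \<noteq> 0"
    using ex_trace_nonzero[OF q2 assms(2,3)] by blast
  obtain c where c: "\<forall>i<n. c i \<in> base_field q" "w / d = (\<Sum>i<n. c i * v i)"
    using basis unfolding is_basis_over_def by blast
  have "w = (\<Sum>i<n. c i * v i) * d"
    using c(2) \<open>d \<noteq> 0\<close> by (simp add: field_simps)
  then have "trace q n w = (\<Sum>i<n. c i * trace q n (v i * d))"
    using trace_lincomb_mult[OF frobenius_add[OF assms(1,3)] _ c(1)] q2 by simp
  also have "\<dots> = 0"
    using orth by simp
  finally show False
    using w by contradiction
qed

lemma card_PiE_base_field:
  assumes "primepow q" and "n \<ge> 1" and "CARD('a::{field,finite}) = q ^ n"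
  shows "card (PiE {..<n} (\<lambda>_. base_field q :: 'a set)) = CARD('a)"
  using card_base_field[OF assms] assms(3) by (simp add: card_PiE)

lemma is_basis_over_if_surj_trace_coordinates:
  fixes v :: "nat \<Rightarrow> 'a::{field,finite}"
  assumes "primepow q" and "n \<ge> 1" and "CARD('a) = q ^ n"
    and surj: "range (\<lambda>y. \<lambda>i\<in>{..<n}. trace q n (v i * y)) = PiE {..<n} (\<lambda>_. base_field q)"
  shows "is_basis_over (base_field q) n v"
proof -
  let ?P = "PiE {..<n} (\<lambda>_. base_field q :: 'a set)"
  define lc where "lc = (\<lambda>c. \<Sum>i<n. c i * v i)"
  define T where "T y = (\<lambda>i\<in>{..<n}. trace q n (v i * y))" for y
  have range_T: "range T = ?P"
    using surj by (simp add: T_def)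
  note frob = frobenius_add[OF assms(1,3)]
  have q0: "q > 0"
    using primepow_gt_Suc_0[OF assms(1)] by simp
  have trace_lc: "trace q n (lc c * y) = (\<Sum>i<n. c i * trace q n (v i * y))" if "c \<in> ?P" for c y
    unfolding lc_def using that by (intro trace_lincomb_mult[OF frob q0]) auto
  txt \<open>Each coordinate of \<open>c\<close> is recovered by pairing \<open>lc c\<close> with a dual basis vector.\<close>
  have "inj_on lc ?P"
  proof (rule inj_onI)
    fix c d assume c: "c \<in> ?P" and d: "d \<in> ?P" and eq: "lc c = lc d"
    show "c = d"
    proof (rule PiE_ext[OF c d])
      fix j assume j: "j \<in> {..<n}"
      have "(\<lambda>i\<in>{..<n}. if i = j then 1 else 0) \<in> ?P"
        by (simp add: Pi_iff zero_in_base_field[OF q0] one_in_base_field)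
      then obtain y where y: "(\<lambda>i\<in>{..<n}. if i = j then 1 else 0) = T y"
        unfolding range_T[symmetric] by blast
      have dual_y: "trace q n (v i * y) = (if i = j then 1 else 0)" if "i < n" for i
        using fun_cong[OF y, of i] that by (simp add: T_def)
      have dual: "e j = trace q n (lc e * y)" if "e \<in> ?P" for e
      proof -
        have "trace q n (lc e * y) = (\<Sum>i<n. if i = j then e i else 0)"
          unfolding trace_lc[OF that] by (intro sum.cong refl) (simp add: dual_y)
        also have "\<dots> = e j"
          using j by simp
        finally show ?thesis by simp
      qed
      show "c j = d j"
        using dual[OF c] dual[OF d] eq by simp
    qed
  qed
  then have "lc ` ?P = UNIV"
    by (simp add: card_image card_PiE_base_field[OF assms(1-3)] card_eq_UNIV_imp_eq_UNIV)
  with \<open>inj_on lc ?P\<close> have "bij_betw lc ?P UNIV"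
    by (simp add: bij_betw_def)
  then show ?thesis
    unfolding lc_def by (rule is_basis_over_if_bij_betw_lincomb[OF zero_in_base_field[OF q0]])
qed

lemma bij_betw_trace_coordinates_iff:
  fixes v :: "nat \<Rightarrow> 'a::{field,finite}"
  assumes "primepow q" and "n \<ge> 1" and "CARD('a) = q ^ n"
  shows "bij_betw (\<lambda>y. \<lambda>i\<in>{..<n}. trace q n (v i * y)) UNIV (PiE {..<n} (\<lambda>_. base_field q))
    \<longleftrightarrow> is_basis_over (base_field q) n v"
proof
  assume "bij_betw (\<lambda>y. \<lambda>i\<in>{..<n}. trace q n (v i * y)) UNIV (PiE {..<n} (\<lambda>_. base_field q))"
  then show "is_basis_over (base_field q) n v"
    by (intro is_basis_over_if_surj_trace_coordinates[OF assms]) (simp add: bij_betw_def)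
next
  assume basis: "is_basis_over (base_field q) n v"
  let ?P = "PiE {..<n} (\<lambda>_. base_field q :: 'a set)"
  define T where "T y = (\<lambda>i\<in>{..<n}. trace q n (v i * y))" for y
  note frob = frobenius_add[OF assms(1,3)]
  have "inj T"
  proof (rule injI)
    fix y y' assume eq: "T y = T y'"
    have "trace q n (v i * (y - y')) = 0" if "i < n" for i
    proof -
      have "trace q n (v i * y) = trace q n (v i * (y - y')) + trace q n (v i * y')"
        by (simp add: algebra_simps flip: trace_add[OF frob])
      then show ?thesis
        using fun_cong[OF eq, of i] that by (simp add: T_def)
    qed
    then have "y - y' = 0"
      using trace_form_nondegenerate[OF assms basis] by blast
    then show "y = y'" by simp
  qed
  moreover have "range T \<subseteq> ?P"
    using trace_in_base_field[OF assms(1,3)] by (simp add: T_def image_subset_iff)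
  ultimately have "range T = ?P"
    by (intro card_subset_eq) (simp_all add: card_image card_PiE_base_field[OF assms] finite_PiE)
  with \<open>inj T\<close> show "bij_betw T UNIV ?P"
    by (simp add: bij_betw_def)
qed

lemma bij_sum_trace_map_iff:
  fixes a v :: "nat \<Rightarrow> 'a::{field,finite}" and g :: "nat \<Rightarrow> 'a \<Rightarrow> 'a"
  assumes "primepow q" and "n \<ge> 1" and "CARD('a) = q ^ n"
    and g: "\<forall>i<n. g i ` base_field q \<subseteq> base_field q"
  shows "bij (\<lambda>y. \<Sum>i<n. a i * g i (trace q n (v i * y)))
    \<longleftrightarrow> is_basis_over (base_field q) n a \<and> is_basis_over (base_field q) n v
      \<and> (\<forall>i<n. bij_betw (g i) (base_field q) (base_field q))"
proof -
  let ?P = "PiE {..<n} (\<lambda>_. base_field q :: 'a set)"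
  define T where "T = (\<lambda>y. \<lambda>i\<in>{..<n}. trace q n (v i * y))"
  define H where "H = (\<lambda>c. \<lambda>i\<in>{..<n}. g i (c i))"
  define A where "A = (\<lambda>c. \<Sum>i<n. c i * a i)"
  note frob = frobenius_add[OF assms(1,3)]
  have q0: "q > 0"
    using primepow_gt_Suc_0[OF assms(1)] by simp
  have comp: "(\<lambda>y. \<Sum>i<n. a i * g i (trace q n (v i * y))) = A \<circ> H \<circ> T"
    unfolding A_def H_def T_def by (intro ext sum.cong refl) (simp add: mult.commute)
  have "bij (A \<circ> H \<circ> T) \<longleftrightarrow> bij_betw T UNIV ?P \<and> bij_betw H ?P ?P \<and> bij_betw A ?P UNIV"
  proof (rule bij_betw_comp3_iff)
    show "range T \<subseteq> ?P"
      using trace_in_base_field[OF assms(1,3)] by (simp add: T_def image_subset_iff)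
    show "H ` ?P \<subseteq> ?P"
      using g by (fastforce simp: H_def PiE_iff)
  qed (simp_all add: finite_PiE card_PiE_base_field[OF assms(1-3)])
  moreover have "bij_betw T UNIV ?P \<longleftrightarrow> is_basis_over (base_field q) n v"
    unfolding T_def by (rule bij_betw_trace_coordinates_iff[OF assms(1-3)])
  moreover have "bij_betw H ?P ?P \<longleftrightarrow> (\<forall>i<n. bij_betw (g i) (base_field q) (base_field q))"
    unfolding H_def using zero_in_base_field[OF q0] by (subst bij_betw_PiE_map_iff) auto
  moreover have "bij_betw A ?P UNIV \<longleftrightarrow> is_basis_over (base_field q) n a"
    unfolding A_def
    by (rule is_basis_over_iff_bij_betw[symmetric, OF zero_in_base_field[OF q0] diff_in_base_field[OF frob]])
  ultimately show ?thesis
    unfolding comp by blast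
qed

theorem theorem2p1:
  fixes q n :: nat
    and f :: "'a::{field,finite} poly"
    and h :: "nat \<Rightarrow> 'a poly"
    and a v :: "nat \<Rightarrow> 'a"
  assumes "primepow q"
    and "n \<ge> 1"
    and "CARD('a) = q ^ n"
    and "perm_poly_on UNIV f"
    and "\<forall>i<n. poly_over (base_field q) (h i)"
  shows "perm_poly_on UNIV (\<Sum>i<n. smult (a i) (pcompose (h i)
            (pcompose (trace_poly q n) (smult (v i) f))))
     \<longleftrightarrow> (is_basis_over (base_field q) n a \<and> is_basis_over (base_field q) n v
          \<and> (\<forall>i<n. perm_poly_on (base_field q) (h i)))"
proof -
  let ?F = "\<Sum>i<n. smult (a i) (pcompose (h i) (pcompose (trace_poly q n) (smult (v i) f)))"
  let ?G = "\<lambda>y. \<Sum>i<n. a i * poly (h i) (trace q n (v i * y))"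
  have q0: "q > 0"
    using primepow_gt_Suc_0[OF assms(1)] by simp
  have poly_F: "poly ?F = ?G \<circ> poly f"
    by (simp add: fun_eq_iff poly_sum poly_pcompose poly_trace_poly mult.commute)
  have "bij (poly f)"
    using assms(4) by (simp only: perm_poly_on_def)
  then have "bij ?G \<longleftrightarrow> bij (?G \<circ> poly f)"
    by (rule bij_betw_comp_iff)
  then have "perm_poly_on UNIV ?F \<longleftrightarrow> bij ?G"
    by (simp only: perm_poly_on_def poly_F)
  also have "\<dots> \<longleftrightarrow> is_basis_over (base_field q) n a \<and> is_basis_over (base_field q) n v
      \<and> (\<forall>i<n. perm_poly_on (base_field q) (h i))"
    unfolding perm_poly_on_def
    using poly_in_base_field[OF frobenius_add[OF assms(1,3)] q0] assms(5)
    by (intro bij_sum_trace_map_iff[OF assms(1-3)]) auto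
  finally show ?thesis .
qed

end
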